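(* For $|\delta|<1$ and $a,b\in\mathbb{R}$ let $\phi(\delta,a,b)=\mathbb{P}(Z_\delta\in[a,\infty)\times[b,\infty))-\mathbb{P}(Z_0\in[a,\infty)\times[b,\infty))$, where $Z_\delta\sim N\Big(0,\begin{pmatrix}1&\delta\\ \delta&1\end{pmatrix}\Big)$. Then for all $a,b>0$ and $|\delta|<1$, \[ |\phi(\delta,a,b)|\le\frac{1}{2\pi}\frac{1}{\sqrt{1-\delta^2}}\exp\Big(-\frac{a^2+b^2}{2}\Big)\exp\Big(\frac{|\delta|ab}{1-\delta^2}\Big)|\delta|. \] *)

theory Defs
  imports "HOL-Probability.Probability"
begin

definition bvn_density :: "real \<Rightarrow> real \<times> real \<Rightarrow> real" where
  "bvn_density d z = (let x = fst z; y = snd z in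
     exp (- (x^2 - 2 * d * x * y + y^2) / (2 * (1 - d^2))) / (2 * pi * sqrt (1 - d^2)))"

definition bvn :: "real \<Rightarrow> (real \<times> real) measure" where
  "bvn d = density lborel (\<lambda>z. ennreal (bvn_density d z))"

definition phi :: "real \<Rightarrow> real \<Rightarrow> real \<Rightarrow> real" where
  "phi d a b = measure (bvn d) ({a..} \<times> {b..}) - measure (bvn 0) ({a..} \<times> {b..})"

end

(*
  Plackett's identity: the centred bivariate normal density f_r with correlation r satisfies
  d f_r / dr = d^2 f_r / dx dy. Integrating this over r in [0, d] and over the quadrant
  [a, oo) x [b, oo) -- Fubini, justified by a Gaussian majorant that is uniform for
  |r| <= t < 1, and the fundamental theorem of calculus in x and y -- turns phi(d, a, b) into
  the integral of f_r(a, b) over r between 0 and d. For a, b > 0 and |r| <= |d| the exponent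
  of f_r(a, b) is at most -(a^2 + b^2)/2 + |d| a b / (1 - d^2), which bounds the integrand.
*)
theory Submission
  imports Defs "HOL-Real_Asymp.Real_Asymp"
begin

lemma one_minus_square_pos: "\<bar>r\<bar> < 1 \<Longrightarrow> 0 < 1 - (r::real)^2"
  by (simp add: abs_square_less_1)

lemma one_minus_square_bounds:
  fixes r t :: real
  assumes "\<bar>r\<bar> \<le> t" and "t < 1"
  shows "0 < 1 - t^2" and "1 - t^2 \<le> 1 - r^2" and "1 - r^2 \<le> 1"
proof -
  have "0 \<le> t" using assms(1) by linarith
  then show "0 < 1 - t^2" using assms(2) by (simp add: power_less_one_iff abs_square_less_1)
  show "1 - t^2 \<le> 1 - r^2"
    using power_mono[OF assms(1), of 2] by simp
qed simp

lemma quadratic_form_lower_bound: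
  fixes r t x y :: real
  assumes "\<bar>r\<bar> \<le> t"
  shows "(1 - t) * (x^2 + y^2) \<le> x^2 - 2 * r * x * y + y^2"
proof -
  have "0 \<le> t" using assms by linarith
  have "r * (x * y) \<le> \<bar>r\<bar> * \<bar>x * y\<bar>"
    by (simp add: abs_mult[symmetric])
  also have "\<dots> \<le> t * \<bar>x * y\<bar>"
    using assms by (simp add: mult_right_mono)
  also have "\<dots> \<le> t * ((x^2 + y^2) / 2)"
    using sum_squares_bound[of "\<bar>x\<bar>" "\<bar>y\<bar>"] \<open>0 \<le> t\<close>
    by (intro mult_left_mono) (auto simp: abs_mult)
  finally show ?thesis
    by (simp add: algebra_simps)
qed

lemma abs_cross_term_le:
  fixes r x y :: real
  assumes "\<bar>r\<bar> \<le> 1"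
  shows "\<bar>(x - r * y) * (y - r * x)\<bar> \<le> 2 * (x^2 + y^2)"
proof -
  have "\<bar>r * z\<bar> \<le> \<bar>z\<bar>" for z
    using assms by (simp add: abs_mult mult_left_le_one_le)
  then have "\<bar>x - r * y\<bar> \<le> \<bar>x\<bar> + \<bar>y\<bar>" "\<bar>y - r * x\<bar> \<le> \<bar>x\<bar> + \<bar>y\<bar>"
    by (smt (verit))+
  then have "\<bar>(x - r * y) * (y - r * x)\<bar> \<le> (\<bar>x\<bar> + \<bar>y\<bar>)^2"
    unfolding abs_mult power2_eq_square by (intro mult_mono) auto
  also have "\<dots> \<le> 2 * (x^2 + y^2)"
    using sum_squares_bound[of "\<bar>x\<bar>" "\<bar>y\<bar>"] by (simp add: power2_sum)
  finally show ?thesis .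
qed

lemma mult_exp_neg_le:
  fixes c u :: real
  assumes "0 < c"
  shows "u * exp (- 2 * c * u) \<le> exp (- c * u) / c"
proof -
  have "c * u \<le> exp (c * u)"
    using exp_ge_add_one_self[of "c * u"] by linarith
  then have "c * u * exp (- 2 * c * u) \<le> exp (c * u) * exp (- 2 * c * u)"
    by (rule mult_right_mono) simp
  also have "\<dots> = exp (- c * u)"
    by (simp flip: exp_add)
  finally show ?thesis
    using assms by (simp add: field_simps)
qed

lemma has_real_derivative_exp_divide:
  assumes "(E has_real_derivative E') (at r)" and "(N has_real_derivative N') (at r)" and "N r \<noteq> 0"
  shows "((\<lambda>r. exp (E r) / N r) has_real_derivative exp (E r) / N r * (E' - N' / N r)) (at r)"
  using assms
  by (auto intro!: derivative_eq_intros simp: field_simps power2_eq_square)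

lemma set_integral_atLeast_FTC:
  fixes f F :: "real \<Rightarrow> real"
  assumes deriv: "\<And>x. (F has_real_derivative f x) (at x)"
    and cont: "\<And>x. isCont f x"
    and integrable: "set_integrable lborel {a..} f"
    and lim: "(F \<longlongrightarrow> l) at_top"
  shows "(LINT x:{a..}|lborel. f x) = l - F a"
proof -
  have [measurable]: "f \<in> borel_measurable borel"
    using cont by (intro borel_measurable_continuous_onI continuous_at_imp_continuous_on) auto
  have "set_integrable lborel (einterval a \<infinity>) f"
    by (rule set_integrable_subset[OF integrable]) (auto simp: einterval_def)
  moreover have "((F \<circ> real_of_ereal) \<longlongrightarrow> F a) (at_right (ereal a))"
    unfolding ereal_tendsto_simps1
    using DERIV_isCont[OF deriv] by (simp add: isCont_def tendsto_mono[OF at_within_le_at])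
  moreover have "((F \<circ> real_of_ereal) \<longlongrightarrow> l) (at_left \<infinity>)"
    unfolding ereal_tendsto_simps1 using lim .
  ultimately have "(LBINT x=ereal a..\<infinity>. f x) = l - F a"
    by (intro interval_integral_FTC_integrable)
      (auto simp: has_real_derivative_iff_has_vector_derivative[symmetric] deriv cont)
  moreover have "AE x in lborel. x \<in> {a<..} \<longleftrightarrow> x \<in> {a..}"
    using AE_lborel_singleton[of a] by eventually_elim auto
  then have "(LINT x:{a<..}|lborel. f x) = (LINT x:{a..}|lborel. f x)"
    by (intro set_integral_cong_set) (auto simp: set_borel_measurable_def)
  ultimately show ?thesis
    by (simp add: interval_integral_to_infinity_eq)
qed

lemma integrable_exp_neg_square:
  fixes c :: real
  assumes "0 < c"
  shows "integrable lborel (\<lambda>x. exp (- c * x^2))"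
proof -
  define \<sigma> where "\<sigma> = sqrt (1 / (2 * c))"
  have \<sigma>: "0 < \<sigma>" "\<sigma>^2 = 1 / (2 * c)"
    using assms by (auto simp: \<sigma>_def)
  have "exp (- c * x^2) = sqrt (2 * pi * \<sigma>^2) * normal_density 0 \<sigma> x" for x
    using \<sigma> assms by (simp add: normal_density_def field_simps)
  moreover have "integrable lborel (\<lambda>x. sqrt (2 * pi * \<sigma>^2) * normal_density 0 \<sigma> x)"
    using \<sigma> by (intro integrable_mult_right integrable_normal_density)
  ultimately show ?thesis by simp
qed

lemma (in pair_sigma_finite) integrable_product:
  fixes f :: "'a \<Rightarrow> real" and g :: "'b \<Rightarrow> real"
  assumes "integrable M1 f" and "integrable M2 g"
  shows "integrable (M1 \<Otimes>\<^sub>M M2) (\<lambda>(x, y). f x * g y)"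
proof (rule Fubini_integrable)
  show "(\<lambda>(x, y). f x * g y) \<in> borel_measurable (M1 \<Otimes>\<^sub>M M2)"
    using assms by measurable
  have "integrable M1 (\<lambda>x. \<bar>f x\<bar> * (\<integral>y. \<bar>g y\<bar> \<partial>M2))"
    using assms by (intro integrable_mult_left) auto
  then show "integrable M1 (\<lambda>x. \<integral>y. norm (case (x, y) of (x, y) \<Rightarrow> f x * g y) \<partial>M2)"
    by (simp add: abs_mult)
  show "AE x in M1. integrable M2 (\<lambda>y. case (x, y) of (x, y) \<Rightarrow> f x * g y)"
    using assms by auto
qed

lemma integrable_exp_neg_norm_square:
  fixes c :: real
  assumes "0 < c"
  shows "integrable lborel (\<lambda>(x, y). exp (- c * (x^2 + y^2)))"
proof -
  have "integrable (lborel \<Otimes>\<^sub>M lborel) (\<lambda>(x, y). exp (- c * x^2) * exp (- c * y^2))"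
    using assms by (intro lborel_pair.integrable_product integrable_exp_neg_square)
  moreover have "(\<lambda>(x, y). exp (- c * x^2) * exp (- c * y^2))
      = (\<lambda>(x, y). exp (- c * (x^2 + y^2)))"
    by (simp add: fun_eq_iff exp_add[symmetric] distrib_left)
  ultimately show ?thesis
    unfolding lborel_prod by simp
qed

lemma bvn_density_Pair:
  "bvn_density r (x, y) = exp (- (x^2 - 2 * r * x * y + y^2) / (2 * (1 - r^2))) / (2 * pi * sqrt (1 - r^2))"
  by (simp add: bvn_density_def)

lemma bvn_density_nonneg: "\<bar>r\<bar> < 1 \<Longrightarrow> 0 \<le> bvn_density r z"
  using one_minus_square_pos[of r] by (simp add: bvn_density_def Let_def)

lemma bvn_density_measurable [measurable]: "bvn_density r \<in> borel_measurable borel"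
  unfolding bvn_density_def[abs_def] Let_def borel_prod[symmetric] by measurable

fun bvn_density_dx :: "real \<Rightarrow> real \<times> real \<Rightarrow> real" where
  "bvn_density_dx r (x, y) = bvn_density r (x, y) * (r * y - x) / (1 - r^2)"

fun bvn_density_dxy :: "real \<Rightarrow> real \<times> real \<Rightarrow> real" where
  "bvn_density_dxy r (x, y) =
     bvn_density r (x, y) * ((x - r * y) * (y - r * x) / (1 - r^2)^2 + r / (1 - r^2))"

lemma has_real_derivative_bvn_density_x:
  assumes "\<bar>r\<bar> < 1"
  shows "((\<lambda>x. bvn_density r (x, y)) has_real_derivative bvn_density_dx r (x, y)) (at x)"
proof -
  define s where "s = 1 - r^2"
  have "s \<noteq> 0" using one_minus_square_pos[OF assms] by (simp add: s_def)
  then have "((\<lambda>x. - (x^2 - 2 * r * x * y + y^2) / (2 * s)) has_real_derivative (r * y - x) / s) (at x)"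
    by (auto intro!: derivative_eq_intros simp: field_simps)
  from DERIV_exp[THEN DERIV_chain2, OF this] show ?thesis
    unfolding bvn_density_Pair bvn_density_dx.simps s_def by (rule DERIV_cdivide[THEN DERIV_cong]) simp
qed

lemma has_real_derivative_bvn_density_dx_y:
  assumes "\<bar>r\<bar> < 1"
  shows "((\<lambda>y. bvn_density_dx r (x, y)) has_real_derivative bvn_density_dxy r (x, y)) (at y)"
proof -
  define s where "s = 1 - r^2"
  have s: "s \<noteq> 0" using one_minus_square_pos[OF assms] by (simp add: s_def)
  then have "((\<lambda>y. - (x^2 - 2 * r * x * y + y^2) / (2 * s)) has_real_derivative (r * x - y) / s) (at y)"
    by (auto intro!: derivative_eq_intros simp: field_simps)
  from DERIV_exp[THEN DERIV_chain2, OF this]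
  have "((\<lambda>y. bvn_density r (x, y)) has_real_derivative
      bvn_density r (x, y) * ((r * x - y) / s)) (at y)"
    unfolding bvn_density_Pair s_def by (rule DERIV_cdivide[THEN DERIV_cong]) simp
  then show ?thesis
    unfolding bvn_density_dx.simps bvn_density_dxy.simps s_def[symmetric]
    by (auto intro!: derivative_eq_intros simp: s field_simps power2_eq_square)
qed

lemma plackett_identity:
  assumes "\<bar>r\<bar> < 1"
  shows "((\<lambda>r. bvn_density r (x, y)) has_real_derivative bvn_density_dxy r (x, y)) (at r)"
proof -
  define s where "s = 1 - r^2"
  have s: "0 < s" using one_minus_square_pos[OF assms] by (simp add: s_def)
  have "((\<lambda>r. - (x^2 - 2 * r * x * y + y^2)) has_real_derivative 2 * x * y) (at r)"
    by (auto intro!: derivative_eq_intros)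
  moreover have "((\<lambda>r. 2 * (1 - r^2)) has_real_derivative - 4 * r) (at r)"
    by (auto intro!: derivative_eq_intros)
  moreover have "(2 * x * y * (2 * s) - - (x^2 - 2 * r * x * y + y^2) * (- 4 * r)) / (2 * s * (2 * s))
      = (x - r * y) * (y - r * x) / s^2"
  proof -
    have "2 * x * y * (2 * s) - - (x^2 - 2 * r * x * y + y^2) * (- 4 * r) = 4 * ((x - r * y) * (y - r * x))"
      unfolding s_def by (simp add: algebra_simps power2_eq_square)
    then have "(2 * x * y * (2 * s) - - (x^2 - 2 * r * x * y + y^2) * (- 4 * r)) / (2 * s * (2 * s))
        = 4 * ((x - r * y) * (y - r * x)) / (4 * s^2)"
      by (simp add: power2_eq_square mult_ac)
    then show ?thesis by simp
  qed
  ultimately have E: "((\<lambda>r. - (x^2 - 2 * r * x * y + y^2) / (2 * (1 - r^2))) has_real_derivative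
      (x - r * y) * (y - r * x) / s^2) (at r)"
    using s by (auto simp: s_def intro!: DERIV_divide[THEN DERIV_cong])
  have N: "((\<lambda>r. 2 * pi * sqrt (1 - r^2)) has_real_derivative - 2 * pi * r / sqrt s) (at r)"
    using s by (auto intro!: derivative_eq_intros simp: s_def field_simps)
  have "- 2 * pi * r / sqrt s / (2 * pi * sqrt s) = - (r / s)"
    using s by (simp add: field_simps)
  with has_real_derivative_exp_divide[OF E N] s show ?thesis
    unfolding bvn_density_dxy.simps bvn_density_Pair s_def[symmetric] by simp
qed

lemma bvn_density_dxy_measurable [measurable]:
  "(\<lambda>(r, z). bvn_density_dxy r z) \<in> borel_measurable (borel \<Otimes>\<^sub>M borel)"
proof -
  have "(\<lambda>(r, z). bvn_density_dxy r z) = (\<lambda>(r, x, y). bvn_density r (x, y) *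
      ((x - r * y) * (y - r * x) / (1 - r^2)^2 + r / (1 - r^2)))"
    by auto
  moreover have "\<dots> \<in> borel_measurable (borel \<Otimes>\<^sub>M (borel \<Otimes>\<^sub>M borel))"
    unfolding bvn_density_Pair by measurable
  ultimately show ?thesis
    by (simp add: borel_prod)
qed

lemma isCont_bvn_density_dx:
  assumes "\<bar>r\<bar> < 1"
  shows "isCont (\<lambda>x. bvn_density_dx r (x, y)) x"
  using one_minus_square_pos[OF assms]
  by (auto simp: bvn_density_Pair intro!: continuous_intros)

lemma isCont_bvn_density_dxy_y:
  assumes "\<bar>r\<bar> < 1"
  shows "isCont (\<lambda>y. bvn_density_dxy r (x, y)) y"
  using one_minus_square_pos[OF assms]
  by (auto simp: bvn_density_Pair intro!: continuous_intros)

lemma isCont_bvn_density_dxy_r: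
  assumes "\<bar>r\<bar> < 1"
  shows "isCont (\<lambda>r. bvn_density_dxy r (x, y)) r"
  using one_minus_square_pos[OF assms]
  by (auto simp: bvn_density_Pair intro!: continuous_intros)

lemma bvn_density_tendsto_0:
  assumes "\<bar>r\<bar> < 1"
  shows "((\<lambda>x. bvn_density r (x, y)) \<longlongrightarrow> 0) at_top"
  using one_minus_square_pos[OF assms] unfolding bvn_density_Pair by real_asymp

lemma bvn_density_dx_tendsto_0:
  assumes "\<bar>r\<bar> < 1"
  shows "((\<lambda>y. bvn_density_dx r (x, y)) \<longlongrightarrow> 0) at_top"
  using one_minus_square_pos[OF assms] unfolding bvn_density_dx.simps bvn_density_Pair by real_asymp

lemma bvn_density_le_gaussian:
  fixes r t :: real
  assumes "\<bar>r\<bar> \<le> t" and "t < 1"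
  shows "bvn_density r (x, y) \<le> 1 / (2 * pi * sqrt (1 - t^2)) * exp (- ((1 - t) / 2) * (x^2 + y^2))"
proof -
  define s where "s = 1 - r^2"
  define Q where "Q = x^2 - 2 * r * x * y + y^2"
  note s = one_minus_square_bounds[OF assms, folded s_def]
  have Q: "(1 - t) * (x^2 + y^2) \<le> Q"
    unfolding Q_def by (rule quadratic_form_lower_bound[OF assms(1)])
  moreover have "0 \<le> (1 - t) * (x^2 + y^2)"
    using assms(2) by simp
  ultimately have "Q / 2 \<le> Q / (2 * s)"
    using s by (intro divide_left_mono) auto
  with Q have "- Q / (2 * s) \<le> - ((1 - t) / 2) * (x^2 + y^2)"
    by (simp add: field_simps)
  moreover have "1 / (2 * pi * sqrt s) \<le> 1 / (2 * pi * sqrt (1 - t^2))"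
    using s by (intro divide_left_mono mult_left_mono mult_pos_pos) auto
  ultimately have "exp (- Q / (2 * s)) * (1 / (2 * pi * sqrt s))
      \<le> exp (- ((1 - t) / 2) * (x^2 + y^2)) * (1 / (2 * pi * sqrt (1 - t^2)))"
    using s by (intro mult_mono) auto
  then show ?thesis
    by (simp add: bvn_density_Pair s_def Q_def mult.commute)
qed

(* The quadratic factor of bvn_density_dxy is absorbed by half of the Gaussian decay of
   the density, hence the rate (1 - t) / 4 instead of (1 - t) / 2. *)
lemma bvn_density_dxy_bound:
  fixes t :: real
  assumes "t < 1"
  obtains M where "\<And>r x y. \<bar>r\<bar> \<le> t \<Longrightarrow>
    \<bar>bvn_density_dxy r (x, y)\<bar> \<le> M * exp (- ((1 - t) / 4) * (x^2 + y^2))"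
proof
  define s\<^sub>0 where "s\<^sub>0 = 1 - t^2"
  define K where "K = 1 / (2 * pi * sqrt s\<^sub>0)"
  define c where "c = (1 - t) / 4"
  fix r x y :: real
  assume r: "\<bar>r\<bar> \<le> t"
  define s where "s = 1 - r^2"
  define u where "u = x^2 + y^2"
  note s = one_minus_square_bounds[OF r assms, folded s_def s\<^sub>0_def]
  have "0 < c" "0 \<le> u" "0 \<le> K"
    using assms s by (auto simp: c_def u_def K_def)
  have "\<bar>(x - r * y) * (y - r * x) / s^2\<bar> \<le> 2 * u / s\<^sub>0^2"
    using abs_cross_term_le[of r x y] r assms s \<open>0 \<le> u\<close>
    by (auto simp: u_def abs_divide intro!: frac_le power_mono)
  moreover have "\<bar>r / s\<bar> \<le> 1 / s\<^sub>0"
    using r assms s by (auto simp: abs_divide intro!: frac_le)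
  ultimately have factor:
      "\<bar>(x - r * y) * (y - r * x) / s^2 + r / s\<bar> \<le> 2 * u / s\<^sub>0^2 + 1 / s\<^sub>0"
    by linarith
  have "- 2 * c * u = - ((1 - t) / 2) * (x^2 + y^2)"
    unfolding c_def u_def by (simp add: field_simps)
  then have density: "bvn_density r (x, y) \<le> K * exp (- 2 * c * u)"
    using bvn_density_le_gaussian[OF r assms] unfolding K_def s\<^sub>0_def by presburger
  have "\<bar>bvn_density_dxy r (x, y)\<bar>
      = bvn_density r (x, y) * \<bar>(x - r * y) * (y - r * x) / s^2 + r / s\<bar>"
    using bvn_density_nonneg[of r] r assms by (simp add: s_def abs_mult)
  also have "\<dots> \<le> K * exp (- 2 * c * u) * (2 * u / s\<^sub>0^2 + 1 / s\<^sub>0)"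
    using density factor r assms \<open>0 \<le> K\<close> by (intro mult_mono) (auto intro: bvn_density_nonneg)
  also have "\<dots> = K * (2 / s\<^sub>0^2 * (u * exp (- 2 * c * u)) + exp (- 2 * c * u) / s\<^sub>0)"
    by (simp add: field_simps)
  also have "\<dots> \<le> K * (2 / s\<^sub>0^2 * (exp (- c * u) / c) + exp (- c * u) / s\<^sub>0)"
    using mult_exp_neg_le[OF \<open>0 < c\<close>, of u] \<open>0 < c\<close> \<open>0 \<le> u\<close> \<open>0 \<le> K\<close> s
    by (intro mult_left_mono add_mono divide_right_mono) (auto simp: mult_left_mono)
  also have "\<dots> = K * (2 / (s\<^sub>0^2 * c) + 1 / s\<^sub>0) * exp (- c * u)"
    by (simp add: field_simps)
  finally show "\<bar>bvn_density_dxy r (x, y)\<bar>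
      \<le> K * (2 / (s\<^sub>0^2 * c) + 1 / s\<^sub>0) * exp (- ((1 - t) / 4) * (x^2 + y^2))"
    by (simp add: c_def u_def)
qed

lemma integrable_bvn_density:
  assumes "\<bar>r\<bar> < 1"
  shows "integrable lborel (bvn_density r)"
proof (rule Bochner_Integration.integrable_bound)
  let ?K = "1 / (2 * pi * sqrt (1 - \<bar>r\<bar>^2))"
  let ?G = "\<lambda>(x, y). ?K * exp (- ((1 - \<bar>r\<bar>) / 2) * (x^2 + y^2))"
  show "integrable lborel ?G"
    using integrable_exp_neg_norm_square[of "(1 - \<bar>r\<bar>) / 2"] assms
    by (simp add: case_prod_beta')
  have "norm (bvn_density r (x, y)) \<le> norm (?G (x, y))" for x y
    using bvn_density_le_gaussian[of r "\<bar>r\<bar>" x y] bvn_density_nonneg[of r "(x, y)"]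
      one_minus_square_pos[OF assms] assms by (simp add: abs_mult)
  then show "AE z in lborel. norm (bvn_density r z) \<le> norm (?G z)"
    by (simp add: split_paired_all)
qed simp

lemma integrable_bvn_density_dxy:
  assumes "\<bar>r\<bar> < 1"
  shows "integrable lborel (bvn_density_dxy r)"
proof -
  obtain M where M:
      "\<And>x y. \<bar>bvn_density_dxy r (x, y)\<bar> \<le> M * exp (- ((1 - \<bar>r\<bar>) / 4) * (x^2 + y^2))"
    using bvn_density_dxy_bound[of "\<bar>r\<bar>"] assms by (metis order_refl)
  let ?G = "\<lambda>(x, y). M * exp (- ((1 - \<bar>r\<bar>) / 4) * (x^2 + y^2))"
  show ?thesis
  proof (rule Bochner_Integration.integrable_bound)
    show "integrable lborel ?G"
      using integrable_exp_neg_norm_square[of "(1 - \<bar>r\<bar>) / 4"] assms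
      by (simp add: case_prod_beta')
    have "norm (bvn_density_dxy r (x, y)) \<le> norm (?G (x, y))" for x y
      using M[of x y] by simp
    then show "AE z in lborel. norm (bvn_density_dxy r z) \<le> norm (?G z)"
      by (simp add: split_paired_all)
    show "bvn_density_dxy r \<in> borel_measurable lborel"
      by measurable
  qed
qed

lemma set_integral_atLeast_bvn_density_dxy:
  assumes r: "\<bar>r\<bar> < 1"
  shows "(LINT y:{b..}|lborel. bvn_density_dxy r (x, y)) = - bvn_density_dx r (x, b)"
proof -
  define c where "c = (1 - \<bar>r\<bar>) / 4"
  obtain M where M: "\<And>y. \<bar>bvn_density_dxy r (x, y)\<bar> \<le> M * exp (- c * (x^2 + y^2))"
    using bvn_density_dxy_bound[of "\<bar>r\<bar>"] r unfolding c_def by (metis order_refl)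
  have "integrable lborel (\<lambda>y. bvn_density_dxy r (x, y))"
  proof (rule Bochner_Integration.integrable_bound)
    show "integrable lborel (\<lambda>y. M * exp (- c * x^2) * exp (- c * y^2))"
      using r by (intro integrable_mult_right integrable_exp_neg_square) (simp add: c_def)
    show "(\<lambda>y. bvn_density_dxy r (x, y)) \<in> borel_measurable lborel"
      using isCont_bvn_density_dxy_y[OF r]
      by (auto intro!: borel_measurable_continuous_onI continuous_at_imp_continuous_on)
    have "norm (bvn_density_dxy r (x, y)) \<le> norm (M * exp (- c * x^2) * exp (- c * y^2))" for y
      using M[of y] by (simp del: bvn_density_dxy.simps add: mult.assoc distrib_left flip: exp_add)
    then show "AE y in lborel.
        norm (bvn_density_dxy r (x, y)) \<le> norm (M * exp (- c * x^2) * exp (- c * y^2))"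
      by simp
  qed
  then have "set_integrable lborel {b..} (\<lambda>y. bvn_density_dxy r (x, y))"
    unfolding set_integrable_def by (intro integrable_mult_indicator) auto
  with has_real_derivative_bvn_density_dx_y[OF r] isCont_bvn_density_dxy_y[OF r]
  have "(LINT y:{b..}|lborel. bvn_density_dxy r (x, y)) = 0 - bvn_density_dx r (x, b)"
    using bvn_density_dx_tendsto_0[OF r] by (rule set_integral_atLeast_FTC)
  then show ?thesis
    by simp
qed

lemma set_integral_quadrant_bvn_density_dxy:
  assumes r: "\<bar>r\<bar> < 1"
  shows "(LINT z:{a..} \<times> {b..}|lborel. bvn_density_dxy r z) = bvn_density r (a, b)"
proof -
  define f where "f x y = indicator {a..} x * (indicator {b..} y * bvn_density_dxy r (x, y))" for x y
  have f_eq: "(\<lambda>(x, y). f x y) = (\<lambda>z. indicator ({a..} \<times> {b..}) z *\<^sub>R bvn_density_dxy r z)"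
    by (auto simp: f_def indicator_times)
  have f_integrable: "integrable (lborel \<Otimes>\<^sub>M lborel) (\<lambda>(x, y). f x y)"
    unfolding f_eq lborel_prod
    by (intro integrable_mult_indicator integrable_bvn_density_dxy r)
      (simp add: borel_closed closed_Times)
  have inner: "(\<integral>y. f x y \<partial>lborel) = indicator {a..} x * - bvn_density_dx r (x, b)" for x
    using set_integral_atLeast_bvn_density_dxy[OF r, of b x]
    by (simp add: f_def set_lebesgue_integral_def)
  have "(LINT z:{a..} \<times> {b..}|lborel. bvn_density_dxy r z)
      = (\<integral>z. (\<lambda>(x, y). f x y) z \<partial>(lborel \<Otimes>\<^sub>M lborel))"
    unfolding set_lebesgue_integral_def f_eq lborel_prod ..
  also have "\<dots> = (\<integral>x. \<integral>y. f x y \<partial>lborel \<partial>lborel)"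
    using lborel_pair.integral_fst'[OF f_integrable] by simp
  also have "\<dots> = (LINT x:{a..}|lborel. - bvn_density_dx r (x, b))"
    by (simp add: inner set_lebesgue_integral_def)
  also have "\<dots> = 0 - (- bvn_density r (a, b))"
  proof (rule set_integral_atLeast_FTC)
    show "((\<lambda>x. - bvn_density r (x, b)) has_real_derivative - bvn_density_dx r (x, b)) (at x)" for x
      using has_real_derivative_bvn_density_x[OF r] by (rule DERIV_minus)
    show "isCont (\<lambda>x. - bvn_density_dx r (x, b)) x" for x
      using isCont_bvn_density_dx[OF r] by (rule continuous_minus)
    show "set_integrable lborel {a..} (\<lambda>x. - bvn_density_dx r (x, b))"
      using lborel_pair.integrable_fst'[OF f_integrable]
      by (simp add: inner set_integrable_def)
    show "((\<lambda>x. - bvn_density r (x, b)) \<longlongrightarrow> 0) at_top"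
      using tendsto_minus[OF bvn_density_tendsto_0[OF r]] by simp
  qed
  finally show ?thesis
    by simp
qed

lemma set_integral_Icc_bvn_density_dxy:
  assumes "p \<le> q" and "\<bar>p\<bar> < 1" and "\<bar>q\<bar> < 1"
  shows "(LINT r:{p..q}|lborel. bvn_density_dxy r z) = bvn_density q z - bvn_density p z"
proof -
  obtain x y where z: "z = (x, y)"
    by fastforce
  have r_lt: "\<bar>r\<bar> < 1" if "p \<le> r" "r \<le> q" for r
    using assms that by auto
  show ?thesis
    unfolding set_lebesgue_integral_def
  proof (rule integral_FTC_atLeastAtMost[OF \<open>p \<le> q\<close>])
    show "((\<lambda>r. bvn_density r z) has_vector_derivative bvn_density_dxy r z) (at r within {p..q})"
      if "p \<le> r" "r \<le> q" for r
      using plackett_identity[OF r_lt[OF that]] unfolding z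
      by (auto simp: has_real_derivative_iff_has_vector_derivative[symmetric]
          intro: has_field_derivative_at_within)
    show "continuous_on {p..q} (\<lambda>r. bvn_density_dxy r z)"
      using isCont_bvn_density_dxy_r[OF r_lt] unfolding z
      by (auto intro!: continuous_at_imp_continuous_on)
  qed
qed

lemma integrable_bvn_density_dxy_strip:
  assumes "A \<in> sets borel" and "\<bar>p\<bar> < 1" and "\<bar>q\<bar> < 1"
  shows "integrable (lborel \<Otimes>\<^sub>M lborel)
    (\<lambda>(r, z). indicator {p..q} r * (indicator A z * bvn_density_dxy r z))"
proof -
  define t where "t = max \<bar>p\<bar> \<bar>q\<bar>"
  have "t < 1" and r_le: "\<And>r. r \<in> {p..q} \<Longrightarrow> \<bar>r\<bar> \<le> t"
    using assms by (auto simp: t_def)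
  obtain M where M: "\<And>r x y. \<bar>r\<bar> \<le> t \<Longrightarrow>
      \<bar>bvn_density_dxy r (x, y)\<bar> \<le> M * exp (- ((1 - t) / 4) * (x^2 + y^2))"
    using bvn_density_dxy_bound[OF \<open>t < 1\<close>] by blast
  define G where "G = (\<lambda>(x, y). M * exp (- ((1 - t) / 4) * (x^2 + y^2)))"
  show ?thesis
  proof (rule Bochner_Integration.integrable_bound)
    have "integrable lborel G"
      using integrable_exp_neg_norm_square[of "(1 - t) / 4"] \<open>t < 1\<close>
      by (simp add: G_def case_prod_beta')
    then show "integrable (lborel \<Otimes>\<^sub>M lborel) (\<lambda>(r, z). indicator {p..q} r * G z)"
      by (intro lborel_pair.integrable_product integrable_real_indicator)
        (auto simp: emeasure_lborel_Icc_eq)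
    show "(\<lambda>(r, z). indicator {p..q} r * (indicator A z * bvn_density_dxy r z))
        \<in> borel_measurable (lborel \<Otimes>\<^sub>M lborel)"
      using assms(1) by measurable
    have "\<bar>indicator {p..q} r * (indicator A (x, y) * bvn_density_dxy r (x, y))\<bar>
        \<le> \<bar>indicator {p..q} r * G (x, y)\<bar>" for r x y
      using M[OF r_le, of r x y] by (auto simp: G_def indicator_def)
    then show "AE rz in lborel \<Otimes>\<^sub>M lborel.
        norm (case rz of (r, z) \<Rightarrow> indicator {p..q} r * (indicator A z * bvn_density_dxy r z))
        \<le> norm (case rz of (r, z) \<Rightarrow> indicator {p..q} r * G z)"
      by (simp add: split_paired_all)
  qed
qed

lemma set_integral_bvn_density_diff:
  assumes "A \<in> sets borel" and "p \<le> q" and "\<bar>p\<bar> < 1" and "\<bar>q\<bar> < 1"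
  shows "(LINT z:A|lborel. bvn_density q z - bvn_density p z)
    = (LINT r:{p..q}|lborel. LINT z:A|lborel. bvn_density_dxy r z)"
proof -
  define h where "h r z = indicator {p..q} r * (indicator A z * bvn_density_dxy r z)" for r z
  have "(LINT z:A|lborel. bvn_density q z - bvn_density p z)
      = (\<integral>z. \<integral>r. h r z \<partial>lborel \<partial>lborel)"
    using set_integral_Icc_bvn_density_dxy[OF assms(2-4)]
    by (simp add: h_def set_lebesgue_integral_def mult.left_commute)
  also have "\<dots> = (\<integral>r. \<integral>z. h r z \<partial>lborel \<partial>lborel)"
    using integrable_bvn_density_dxy_strip[OF assms(1,3,4)] unfolding h_def
    by (rule lborel_pair.Fubini_integral)
  also have "\<dots> = (LINT r:{p..q}|lborel. LINT z:A|lborel. bvn_density_dxy r z)"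
    by (simp add: h_def set_lebesgue_integral_def)
  finally show ?thesis .
qed

lemma measure_bvn:
  assumes "\<bar>r\<bar> < 1" and "A \<in> sets borel"
  shows "measure (bvn r) A = (LINT z:A|lborel. bvn_density r z)"
proof -
  have "emeasure (bvn r) A = (\<integral>\<^sup>+z\<in>A. bvn_density r z \<partial>lborel)"
    unfolding bvn_def using assms(2) by (simp add: emeasure_density)
  also have "\<dots> = (LINT z:A|lborel. bvn_density r z)"
    using assms integrable_bvn_density bvn_density_nonneg
    by (intro nn_set_integral_eq_set_integral) auto
  finally show ?thesis
    using assms bvn_density_nonneg
    by (simp add: measure_def set_lebesgue_integral_def integral_nonneg)
qed

lemma bvn_quadrant_measure_diff:
  assumes "p \<le> q" and p: "\<bar>p\<bar> < 1" and q: "\<bar>q\<bar> < 1"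
  shows "measure (bvn q) ({a..} \<times> {b..}) - measure (bvn p) ({a..} \<times> {b..})
    = (LINT r:{p..q}|lborel. bvn_density r (a, b))"
proof -
  let ?Q = "{a..} \<times> {b..} :: (real \<times> real) set"
  have Q: "?Q \<in> sets borel"
    by (simp add: borel_closed closed_Times)
  have "set_integrable lborel ?Q (bvn_density r)" if "\<bar>r\<bar> < 1" for r
    unfolding set_integrable_def using Q integrable_bvn_density[OF that]
    by (intro integrable_mult_indicator) auto
  then have "measure (bvn q) ?Q - measure (bvn p) ?Q
      = (LINT z:?Q|lborel. bvn_density q z - bvn_density p z)"
    using p q Q by (simp add: measure_bvn)
  also have "\<dots> = (LINT r:{p..q}|lborel. LINT z:?Q|lborel. bvn_density_dxy r z)"
    using Q assms by (rule set_integral_bvn_density_diff)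
  also have "\<dots> = (LINT r:{p..q}|lborel. bvn_density r (a, b))"
    using assms by (intro set_lebesgue_integral_cong) (auto simp: set_integral_quadrant_bvn_density_dxy)
  finally show ?thesis .
qed

lemma bvn_density_le_on_positive_quadrant:
  fixes r t x y :: real
  assumes "\<bar>r\<bar> \<le> t" and "t < 1" and "0 \<le> x" and "0 \<le> y"
  shows "bvn_density r (x, y) \<le> 1 / (2 * pi) * (1 / sqrt (1 - t^2)) * exp (- (x^2 + y^2) / 2)
    * exp (t * x * y / (1 - t^2))"
proof -
  define s where "s = 1 - r^2"
  define s\<^sub>0 where "s\<^sub>0 = 1 - t^2"
  note s = one_minus_square_bounds[OF assms(1,2), folded s_def s\<^sub>0_def]
  have "0 \<le> x * y"
    using assms by simp
  have "(x^2 + y^2) / 2 \<le> (x^2 + y^2) / (2 * s)"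
    using s by (intro divide_left_mono) auto
  then have "- (x^2 + y^2) / (2 * s) \<le> - (x^2 + y^2) / 2"
    by (simp only: minus_divide_left[symmetric] neg_le_iff_le)
  moreover have "r * x * y / s \<le> t * x * y / s\<^sub>0"
  proof -
    have "r * (x * y) / s \<le> t * (x * y) / s"
      using assms(1) s \<open>0 \<le> x * y\<close> by (intro divide_right_mono mult_right_mono) auto
    also have "\<dots> \<le> t * (x * y) / s\<^sub>0"
      using assms(1) s \<open>0 \<le> x * y\<close> by (intro divide_left_mono) auto
    finally show ?thesis
      by (simp add: mult.assoc)
  qed
  moreover have "- (x^2 - 2 * r * x * y + y^2) / (2 * s) = - (x^2 + y^2) / (2 * s) + r * x * y / s"
    using s by (simp add: field_simps)
  ultimately have "exp (- (x^2 - 2 * r * x * y + y^2) / (2 * s))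
      \<le> exp (- (x^2 + y^2) / 2) * exp (t * x * y / s\<^sub>0)"
    by (simp only: exp_add[symmetric] exp_le_cancel_iff)
  moreover have "1 / (2 * pi * sqrt s) \<le> 1 / (2 * pi) * (1 / sqrt s\<^sub>0)"
    using s by (simp add: divide_simps)
  ultimately have "exp (- (x^2 - 2 * r * x * y + y^2) / (2 * s)) * (1 / (2 * pi * sqrt s))
      \<le> exp (- (x^2 + y^2) / 2) * exp (t * x * y / s\<^sub>0) * (1 / (2 * pi) * (1 / sqrt s\<^sub>0))"
    using s by (intro mult_mono) auto
  then show ?thesis
    by (simp add: bvn_density_Pair s_def s\<^sub>0_def mult_ac)
qed

lemma bvn_quadrant_measure_diff_bounds:
  fixes p q t a b :: real
  assumes "p \<le> q" and "\<bar>p\<bar> \<le> t" and "\<bar>q\<bar> \<le> t" and "t < 1" and "0 \<le> a" and "0 \<le> b"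
  defines "D \<equiv> measure (bvn q) ({a..} \<times> {b..}) - measure (bvn p) ({a..} \<times> {b..})"
  shows "0 \<le> D"
    and "D \<le> 1 / (2 * pi) * (1 / sqrt (1 - t^2)) * exp (- (a^2 + b^2) / 2)
      * exp (t * a * b / (1 - t^2)) * (q - p)"
proof -
  define B where "B = 1 / (2 * pi) * (1 / sqrt (1 - t^2)) * exp (- (a^2 + b^2) / 2)
    * exp (t * a * b / (1 - t^2))"
  have r_le: "\<bar>r\<bar> \<le> t" if "r \<in> {p..q}" for r
    using assms that by auto
  then have r_lt: "\<bar>r\<bar> < 1" if "r \<in> {p..q}" for r
    using assms(4) that by fastforce
  have D: "D = (LINT r:{p..q}|lborel. bvn_density r (a, b))"
    unfolding D_def using assms r_lt by (intro bvn_quadrant_measure_diff) auto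
  have "set_integrable lborel {p..q} (\<lambda>r. bvn_density r (a, b))"
    unfolding set_integrable_def
    using DERIV_isCont[OF plackett_identity[OF r_lt]]
    by (intro borel_integrable_compact) (auto intro!: continuous_at_imp_continuous_on)
  moreover have "set_integrable lborel {p..q} (\<lambda>_. B)"
    unfolding set_integrable_def using \<open>p \<le> q\<close> by auto
  ultimately have "D \<le> (LINT r:{p..q}|lborel. B)"
    unfolding D using bvn_density_le_on_positive_quadrant[OF r_le \<open>t < 1\<close>] assms
    by (intro set_integral_mono) (auto simp: B_def)
  then show "D \<le> B * (q - p)"
    using \<open>p \<le> q\<close> by (simp add: set_integral_const mult.commute)
  show "0 \<le> D"
    unfolding D set_lebesgue_integral_def using r_lt
    by (intro integral_nonneg_AE AE_I2) (auto simp: indicator_def intro: bvn_density_nonneg)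
qed

theorem lemma4p4:
  fixes d a b :: real
  assumes "\<bar>d\<bar> < 1" and "a > 0" and "b > 0"
  shows "\<bar>phi d a b\<bar> \<le> 1 / (2 * pi) * (1 / sqrt (1 - d^2)) * exp (- (a^2 + b^2) / 2)
           * exp (\<bar>d\<bar> * a * b / (1 - d^2)) * \<bar>d\<bar>"
proof (cases "0 \<le> d")
  case True
  then show ?thesis
    using bvn_quadrant_measure_diff_bounds[of 0 d "\<bar>d\<bar>" a b] assms
    by (simp add: phi_def)
next
  case False
  then show ?thesis
    using bvn_quadrant_measure_diff_bounds[of d 0 "\<bar>d\<bar>" a b] assms
    by (simp add: phi_def)
qed

end
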